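(* Let $(X=\{x_1,\dots,x_n\},d)$ be a finite metric space with $n\ge1$ points and $L$ the Lipschitz seminorm of $d$ on $C(X)$. Define $P_n:M_n\to C(X)$ by $P_n(A)(x_i)=A_{i,i}$ and $L_{o,n}(A)=\sup_{i\ne j}|A_{i,j}|$. For $\varepsilon>0$ set \[L_\varepsilon=\max\Big\{L\circ P_n,\ \frac{n^2-n}{2\varepsilon}L_{o,n}\Big\}.\] Then $L_\varepsilon$ is a Lip-norm on $M_n$ (i.e. on its self-adjoint part), and \[\operatorname{dist}_q\big((C(X),L),(M_n,L_\varepsilon)\big)\le\varepsilon.\]
   Context: $M_n$ is the algebra of $n\times n$ complex matrices; $A_{i,j}$ denotes the $(i,j)$ entry. The Lipschitz seminorm is $L(f)=\sup_{x\ne y}|f(x)-f(y)|/d(x,y)$. A Lip-norm on an order-unit space (here the self-adjoint part of a unital C*-algebra) is a seminorm $L$ vanishing exactly on scalar multiples of the unit such that $d_L(\mu,\nu)=\sup\{|\mu(a)-\nu(a)|:L(a)\le1\}$ induces the weak* topology on the state space. $\operatorname{dist}_q$ is Rieffel's quantum Gromov–Hausdorff distance: the infimum, over Lip-norms on the direct sum whose quotients are the given Lip-norms, of the Hausdorff distance for the dual metric between the two state spaces inside the state space of the direct sum. *)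

theory Defs
  imports "HOL-Analysis.Analysis"
begin

text \<open>Normalised to be 0
  outside V so that states are uniquely represented.\<close>
definition is_state :: "'v::real_vector set \<Rightarrow> ('v \<Rightarrow> bool) \<Rightarrow> 'v \<Rightarrow> ('v \<Rightarrow> real) \<Rightarrow> bool" where
  "is_state V pos e \<phi> \<longleftrightarrow>
     (\<forall>x\<in>V. \<forall>y\<in>V. \<phi> (x + y) = \<phi> x + \<phi> y) \<and>
     (\<forall>c. \<forall>x\<in>V. \<phi> (c *\<^sub>R x) = c * \<phi> x) \<and>
     (\<forall>x\<in>V. pos x \<longrightarrow> 0 \<le> \<phi> x) \<and>
     \<phi> e = 1 \<and>
     (\<forall>x. x \<notin> V \<longrightarrow> \<phi> x = 0)"

definition state_space :: "'v::real_vector set \<Rightarrow> ('v \<Rightarrow> bool) \<Rightarrow> 'v \<Rightarrow> ('v \<Rightarrow> real) set" where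
  "state_space V pos e = Collect (is_state V pos e)"

text \<open>The dual metric d_L (extended-real valued, so that it is total).\<close>
definition lip_dist :: "'v set \<Rightarrow> ('v \<Rightarrow> real) \<Rightarrow> ('v \<Rightarrow> real) \<Rightarrow> ('v \<Rightarrow> real) \<Rightarrow> ereal" where
  "lip_dist V L \<mu> \<nu> = (SUP a\<in>{a\<in>V. L a \<le> 1}. ereal \<bar>\<mu> a - \<nu> a\<bar>)"

definition weak_star_open :: "'v set \<Rightarrow> ('v \<Rightarrow> real) set \<Rightarrow> ('v \<Rightarrow> real) set \<Rightarrow> bool" where
  "weak_star_open V S U \<longleftrightarrow> U \<subseteq> S \<and>
     (\<forall>\<phi>\<in>U. \<exists>F. finite F \<and> F \<subseteq> V \<and>
        (\<exists>\<epsilon>>0. {\<psi>\<in>S. \<forall>a\<in>F. \<bar>\<psi> a - \<phi> a\<bar> < \<epsilon>} \<subseteq> U))"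

definition metric_open :: "'v set \<Rightarrow> ('v \<Rightarrow> real) \<Rightarrow> ('v \<Rightarrow> real) set \<Rightarrow> ('v \<Rightarrow> real) set \<Rightarrow> bool" where
  "metric_open V L S U \<longleftrightarrow> U \<subseteq> S \<and>
     (\<forall>\<phi>\<in>U. \<exists>\<epsilon>>0. {\<psi>\<in>S. lip_dist V L \<phi> \<psi> < ereal \<epsilon>} \<subseteq> U)"

definition is_seminorm_on :: "'v::real_vector set \<Rightarrow> ('v \<Rightarrow> real) \<Rightarrow> bool" where
  "is_seminorm_on V L \<longleftrightarrow>
     (\<forall>x\<in>V. \<forall>y\<in>V. L (x + y) \<le> L x + L y) \<and>
     (\<forall>c. \<forall>x\<in>V. L (c *\<^sub>R x) = \<bar>c\<bar> * L x)"

definition is_lip_norm :: "'v::real_vector set \<Rightarrow> ('v \<Rightarrow> bool) \<Rightarrow> 'v \<Rightarrow> ('v \<Rightarrow> real) \<Rightarrow> bool" where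
  "is_lip_norm V pos e L \<longleftrightarrow>
     is_seminorm_on V L \<and>
     (\<forall>a\<in>V. L a = 0 \<longleftrightarrow> (\<exists>t. a = t *\<^sub>R e)) \<and>
     (\<forall>\<mu>\<in>state_space V pos e. \<forall>\<nu>\<in>state_space V pos e. lip_dist V L \<mu> \<nu> < \<infinity>) \<and>
     (\<forall>U. weak_star_open V (state_space V pos e) U \<longleftrightarrow> metric_open V L (state_space V pos e) U)"

definition sum_pos :: "('a \<Rightarrow> bool) \<Rightarrow> ('b \<Rightarrow> bool) \<Rightarrow> 'a \<times> 'b \<Rightarrow> bool" where
  "sum_pos posA posB p \<longleftrightarrow> posA (fst p) \<and> posB (snd p)"

definition admissible ::
  "'a::real_vector set \<Rightarrow> ('a \<Rightarrow> bool) \<Rightarrow> 'a \<Rightarrow> ('a \<Rightarrow> real) \<Rightarrow>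
   'b::real_vector set \<Rightarrow> ('b \<Rightarrow> bool) \<Rightarrow> 'b \<Rightarrow> ('b \<Rightarrow> real) \<Rightarrow> ('a \<times> 'b \<Rightarrow> real) \<Rightarrow> bool" where
  "admissible VA posA eA LA VB posB eB LB L \<longleftrightarrow>
     is_lip_norm (VA \<times> VB) (sum_pos posA posB) (eA, eB) L \<and>
     (\<forall>a\<in>VA. LA a = Inf {L (a, b) | b. b \<in> VB}) \<and>
     (\<forall>b\<in>VB. LB b = Inf {L (a, b) | a. a \<in> VA})"

definition embed_fst :: "'a set \<Rightarrow> 'b set \<Rightarrow> ('a \<Rightarrow> real) \<Rightarrow> ('a \<times> 'b \<Rightarrow> real)" where
  "embed_fst VA VB \<phi> = (\<lambda>p. if p \<in> VA \<times> VB then \<phi> (fst p) else 0)"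

definition embed_snd :: "'a set \<Rightarrow> 'b set \<Rightarrow> ('b \<Rightarrow> real) \<Rightarrow> ('a \<times> 'b \<Rightarrow> real)" where
  "embed_snd VA VB \<phi> = (\<lambda>p. if p \<in> VA \<times> VB then \<phi> (snd p) else 0)"

definition hausdorff_dist :: "('s \<Rightarrow> 's \<Rightarrow> ereal) \<Rightarrow> 's set \<Rightarrow> 's set \<Rightarrow> ereal" where
  "hausdorff_dist d S1 S2 =
     max (SUP \<mu>\<in>S1. INF \<nu>\<in>S2. d \<mu> \<nu>) (SUP \<nu>\<in>S2. INF \<mu>\<in>S1. d \<mu> \<nu>)"

definition dist_q ::
  "'a::real_vector set \<Rightarrow> ('a \<Rightarrow> bool) \<Rightarrow> 'a \<Rightarrow> ('a \<Rightarrow> real) \<Rightarrow>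
   'b::real_vector set \<Rightarrow> ('b \<Rightarrow> bool) \<Rightarrow> 'b \<Rightarrow> ('b \<Rightarrow> real) \<Rightarrow> ereal" where
  "dist_q VA posA eA LA VB posB eB LB =
     (INF L\<in>{L. admissible VA posA eA LA VB posB eB LB L}.
        hausdorff_dist (lip_dist (VA \<times> VB) L)
          (embed_fst VA VB ` state_space VA posA eA)
          (embed_snd VA VB ` state_space VB posB eB))"

text \<open>X = {x_1..x_n} is indexed by the finite type 'n, so n = CARD('n) \<ge> 1.\<close>

definition posC :: "real^'n \<Rightarrow> bool" where
  "posC f \<longleftrightarrow> (\<forall>i. 0 \<le> f $ i)"

definition unitC :: "real^'n" where
  "unitC = (\<chi> i. 1)"

definition herm :: "(complex^'n^'n) set" where
  "herm = {A. \<forall>i j. A $ i $ j = cnj (A $ j $ i)}"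

definition psd :: "complex^'n^'n \<Rightarrow> bool" where
  "psd A \<longleftrightarrow> (\<forall>v :: complex^'n. 0 \<le> Re (\<Sum>i\<in>UNIV. \<Sum>j\<in>UNIV. cnj (v $ i) * A $ i $ j * v $ j))"

text \<open>Lipschitz seminorm (sup over the empty set read as 0 when n = 1).\<close>
definition lipschitz_seminorm :: "('n \<Rightarrow> 'n \<Rightarrow> real) \<Rightarrow> real^'n \<Rightarrow> real" where
  "lipschitz_seminorm d f = Sup (insert 0 {\<bar>f $ x - f $ y\<bar> / d x y | x y. x \<noteq> y})"

text \<open>P_n(A)(x_i) = A_{i,i} (real for self-adjoint A).\<close>
definition diag_map :: "complex^'n^'n \<Rightarrow> real^'n" where
  "diag_map A = (\<chi> i. Re (A $ i $ i))"

definition off_diag_norm :: "complex^'n^'n \<Rightarrow> real" where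
  "off_diag_norm A = Sup (insert 0 {cmod (A $ i $ j) | i j. i \<noteq> j})"

definition L_eps :: "('n::finite \<Rightarrow> 'n \<Rightarrow> real) \<Rightarrow> real \<Rightarrow> complex^'n^'n \<Rightarrow> real" where
  "L_eps d \<epsilon> A = max (lipschitz_seminorm d (diag_map A))
      ((real (CARD('n))^2 - real (CARD('n))) / (2 * \<epsilon>) * off_diag_norm A)"

end

theory Submission
  imports Defs
begin

text \<open>
  On a finite-dimensional order-unit space, a seminorm L whose kernel is the scalars is a
  Lip-norm as soon as its unit ball lies in the scalars plus a bounded multiple of the
  absolutely convex hull of finitely many fixed elements b_i: then d_L is dominated by the
  differences of states at the b_i, and conversely every such difference is at most L times d_L.
  For L_eps the b_i form a real spanning set of the Hermitian matrices, because L_eps A \<le> 1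
  bounds the oscillation of the diagonal by the diameter of X and the off-diagonal entries by eps.

  For the distance, the seminorms N(f, A) = max (L f) (max (L_eps A) (|f - P_n A| / gamma)) on
  C(X) + M_n are admissible, the quotients being attained at A = diag f and at f = P_n A.
  A state mu of C(X) is within gamma of mu o P_n. A state nu of M_n is within eps + gamma of
  nu o diag: for p \<noteq> q and T = a E_pq + cnj a E_qp both |a| 1 + T and |a| 1 - T are positive,
  so |nu T| \<le> |a| and |nu (A - diag (P_n A))| \<le> (n^2 - n) / 2 * L_o A \<le> eps.
  Letting gamma tend to 0 gives dist_q \<le> eps.
\<close>

section \<open>Linear functionals, seminorms and a criterion for Lip-norms\<close>

definition linear_on :: "'v::real_vector set \<Rightarrow> ('v \<Rightarrow> real) \<Rightarrow> bool" where
  "linear_on V \<phi> \<longleftrightarrow>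
     (\<forall>x\<in>V. \<forall>y\<in>V. \<phi> (x + y) = \<phi> x + \<phi> y) \<and> (\<forall>c. \<forall>x\<in>V. \<phi> (c *\<^sub>R x) = c * \<phi> x)"

lemma is_state_linear_on: "is_state V pos e \<phi> \<Longrightarrow> linear_on V \<phi>"
  unfolding is_state_def linear_on_def by blast

lemma state_space_linear_on: "\<phi> \<in> state_space V pos e \<Longrightarrow> linear_on V \<phi>"
  unfolding state_space_def by (simp add: is_state_linear_on)

lemma state_space_unit: "\<phi> \<in> state_space V pos e \<Longrightarrow> \<phi> e = 1"
  unfolding state_space_def is_state_def by simp

lemma is_state_scaleR_unit:
  "is_state V pos e \<phi> \<Longrightarrow> e \<in> V \<Longrightarrow> \<phi> (t *\<^sub>R e) = t"
  unfolding is_state_def by simp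

lemma linear_on_add: "linear_on V \<phi> \<Longrightarrow> x \<in> V \<Longrightarrow> y \<in> V \<Longrightarrow> \<phi> (x + y) = \<phi> x + \<phi> y"
  unfolding linear_on_def by blast

lemma linear_on_scaleR: "linear_on V \<phi> \<Longrightarrow> x \<in> V \<Longrightarrow> \<phi> (c *\<^sub>R x) = c * \<phi> x"
  unfolding linear_on_def by blast

lemma linear_on_zero: "linear_on V \<phi> \<Longrightarrow> subspace V \<Longrightarrow> \<phi> 0 = 0"
  using linear_on_scaleR[of V \<phi> 0 0] by (simp add: subspace_0)

lemma linear_on_diff:
  "linear_on V \<phi> \<Longrightarrow> subspace V \<Longrightarrow> x \<in> V \<Longrightarrow> y \<in> V \<Longrightarrow> \<phi> (x - y) = \<phi> x - \<phi> y"
  using linear_on_add[of V \<phi> x "(-1) *\<^sub>R y"] linear_on_scaleR[of V \<phi> y "-1"]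
  by (simp add: subspace_neg)

lemma linear_on_sum:
  assumes "linear_on V \<phi>" "subspace V" "\<And>i. i \<in> I \<Longrightarrow> x i \<in> V"
  shows "\<phi> (\<Sum>i\<in>I. x i) = (\<Sum>i\<in>I. \<phi> (x i))"
  using assms(3)
proof (induction I rule: infinite_finite_induct)
  case (insert i I)
  then show ?case
    using linear_on_add[OF assms(1)] subspace_sum[OF assms(2), of I x] by simp
qed (use linear_on_zero[OF assms(1,2)] in simp_all)

lemma linear_on_sum_scaleR:
  assumes "linear_on V \<phi>" "subspace V" "\<And>i. i \<in> I \<Longrightarrow> x i \<in> V"
  shows "\<phi> (\<Sum>i\<in>I. c i *\<^sub>R x i) = (\<Sum>i\<in>I. c i * \<phi> (x i))"
  using assms by (simp add: linear_on_sum linear_on_scaleR subspace_scale)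

lemma seminorm_nonneg:
  assumes "is_seminorm_on V L" "subspace V" "x \<in> V"
  shows "0 \<le> L x"
proof -
  have hom: "L (c *\<^sub>R x) = \<bar>c\<bar> * L x" for c
    using assms unfolding is_seminorm_on_def by blast
  have "0 = L (0 *\<^sub>R x)" using hom[of 0] by simp
  also have "\<dots> = L (x + (-1) *\<^sub>R x)" by simp
  also have "\<dots> \<le> L x + L ((-1) *\<^sub>R x)"
    using assms subspace_scale[OF assms(2,3)] unfolding is_seminorm_on_def by blast
  also have "\<dots> = 2 * L x" using hom[of "-1"] by simp
  finally show ?thesis by simp
qed

lemma is_seminorm_onI:
  assumes "\<And>x y. L (x + y) \<le> L x + L y" and "\<And>c x. L (c *\<^sub>R x) \<le> \<bar>c\<bar> * L x"
    and "\<And>x. 0 \<le> L x"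
  shows "is_seminorm_on V L"
proof -
  have "L (c *\<^sub>R x) = \<bar>c\<bar> * L x" for c x
  proof (cases "c = 0")
    case True
    then show ?thesis using assms(2)[of 0 x] assms(3)[of 0] by simp
  next
    case False
    have "\<bar>c\<bar> * L x = \<bar>c\<bar> * L ((1 / c) *\<^sub>R (c *\<^sub>R x))" using False by simp
    also have "\<dots> \<le> L (c *\<^sub>R x)"
      using assms(2)[of "1 / c" "c *\<^sub>R x"] False by (simp add: field_simps)
    finally show ?thesis using assms(2)[of c x] by simp
  qed
  then show ?thesis using assms(1) unfolding is_seminorm_on_def by blast
qed

lemma is_seminorm_on_max:
  "is_seminorm_on V L1 \<Longrightarrow> is_seminorm_on V L2 \<Longrightarrow> is_seminorm_on V (\<lambda>x. max (L1 x) (L2 x))"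
  unfolding is_seminorm_on_def
proof (intro conjI ballI allI; (elim conjE)?)
  fix x y assume "x \<in> V" "y \<in> V" "\<forall>x\<in>V. \<forall>y\<in>V. L1 (x + y) \<le> L1 x + L1 y"
    "\<forall>x\<in>V. \<forall>y\<in>V. L2 (x + y) \<le> L2 x + L2 y"
  then have "L1 (x + y) \<le> L1 x + L1 y" "L2 (x + y) \<le> L2 x + L2 y" by blast+
  then show "max (L1 (x + y)) (L2 (x + y)) \<le> max (L1 x) (L2 x) + max (L1 y) (L2 y)" by linarith
qed (simp add: max_mult_distrib_left)

lemma is_seminorm_on_scale:
  "is_seminorm_on V L \<Longrightarrow> 0 \<le> k \<Longrightarrow> is_seminorm_on V (\<lambda>x. k * L x)"
  unfolding is_seminorm_on_def by (simp add: distrib_left[symmetric] mult_left_mono)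

lemma is_seminorm_on_comp_linear:
  assumes "is_seminorm_on UNIV L" "linear P"
  shows "is_seminorm_on V (\<lambda>x. L (P x))"
  using assms unfolding is_seminorm_on_def by (simp add: linear_add linear_scale)

lemma is_seminorm_on_norm: "is_seminorm_on V norm"
  unfolding is_seminorm_on_def by (simp add: norm_triangle_ineq)

definition lip_ball_bounded ::
  "'v::real_vector set \<Rightarrow> 'v \<Rightarrow> ('v \<Rightarrow> real) \<Rightarrow> ('i::finite \<Rightarrow> 'v) \<Rightarrow> real \<Rightarrow> bool" where
  "lip_ball_bounded V e L b C \<longleftrightarrow>
     (\<forall>a\<in>V. L a \<le> 1 \<longrightarrow> (\<exists>t c. a = t *\<^sub>R e + (\<Sum>i\<in>UNIV. c i *\<^sub>R b i) \<and> (\<forall>i. \<bar>c i\<bar> \<le> C)))"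

lemma lip_dist_le:
  "(\<And>a. a \<in> V \<Longrightarrow> L a \<le> 1 \<Longrightarrow> \<bar>\<mu> a - \<nu> a\<bar> \<le> r) \<Longrightarrow> lip_dist V L \<mu> \<nu> \<le> ereal r"
  unfolding lip_dist_def by (auto intro!: SUP_least)

lemma abs_diff_le_lip_dist:
  "a \<in> V \<Longrightarrow> L a \<le> 1 \<Longrightarrow> ereal \<bar>\<mu> a - \<nu> a\<bar> \<le> lip_dist V L \<mu> \<nu>"
  unfolding lip_dist_def by (auto intro!: SUP_upper)

lemma state_diff_le_seminorm:
  assumes V: "subspace V" "e \<in> V" and L: "is_seminorm_on V L"
    and ker: "\<forall>a\<in>V. L a = 0 \<longleftrightarrow> (\<exists>t. a = t *\<^sub>R e)"
    and \<phi>: "\<phi> \<in> state_space V pos e" and \<psi>: "\<psi> \<in> state_space V pos e"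
    and a: "a \<in> V" and dist: "lip_dist V L \<phi> \<psi> < ereal \<eta>"
  shows "\<bar>\<phi> a - \<psi> a\<bar> \<le> L a * \<eta>"
proof (cases "L a = 0")
  case True
  then obtain t where "a = t *\<^sub>R e" using ker a by blast
  then show ?thesis
    using linear_on_scaleR[OF state_space_linear_on[OF \<phi>] V(2)] state_space_unit[OF \<phi>]
      linear_on_scaleR[OF state_space_linear_on[OF \<psi>] V(2)] state_space_unit[OF \<psi>] True
    by simp
next
  case False
  then have La: "L a > 0" using seminorm_nonneg[OF L V(1) a] by simp
  define a' where "a' = (1 / L a) *\<^sub>R a"
  have a': "a' \<in> V" unfolding a'_def using subspace_scale[OF V(1) a] .
  have "L a' = 1" using L a La unfolding a'_def is_seminorm_on_def by simp
  then have "ereal \<bar>\<phi> a' - \<psi> a'\<bar> \<le> lip_dist V L \<phi> \<psi>"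
    using abs_diff_le_lip_dist[OF a'] by simp
  then have "ereal \<bar>\<phi> a' - \<psi> a'\<bar> < ereal \<eta>" using dist by (rule le_less_trans)
  moreover have "\<phi> a' - \<psi> a' = (\<phi> a - \<psi> a) / L a"
    using linear_on_scaleR[OF state_space_linear_on[OF \<phi>] a]
      linear_on_scaleR[OF state_space_linear_on[OF \<psi>] a]
    unfolding a'_def by (simp add: diff_divide_distrib)
  ultimately show ?thesis using La by (simp add: abs_divide divide_less_eq mult.commute)
qed

lemma weak_star_open_imp_metric_open:
  assumes V: "subspace V" "e \<in> V" and L: "is_seminorm_on V L"
    and ker: "\<forall>a\<in>V. L a = 0 \<longleftrightarrow> (\<exists>t. a = t *\<^sub>R e)"
    and U: "weak_star_open V (state_space V pos e) U"
  shows "metric_open V L (state_space V pos e) U"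
  unfolding metric_open_def
proof (intro conjI ballI)
  let ?S = "state_space V pos e"
  show "U \<subseteq> ?S" using U unfolding weak_star_open_def by blast
  fix \<phi> assume "\<phi> \<in> U"
  then have \<phi>: "\<phi> \<in> ?S" using U unfolding weak_star_open_def by blast
  obtain G \<epsilon> where G: "finite G" "G \<subseteq> V" and \<epsilon>: "\<epsilon> > 0"
    and nbhd: "{\<psi>\<in>?S. \<forall>a\<in>G. \<bar>\<psi> a - \<phi> a\<bar> < \<epsilon>} \<subseteq> U"
    using U \<open>\<phi> \<in> U\<close> unfolding weak_star_open_def by blast
  define M where "M = (\<Sum>a\<in>G. L a)"
  have LM: "L a \<le> M" if "a \<in> G" for a
    unfolding M_def using G that seminorm_nonneg[OF L V(1)] by (intro member_le_sum) auto
  have "0 \<le> M" unfolding M_def using G seminorm_nonneg[OF L V(1)] by (intro sum_nonneg) auto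
  define \<eta> where "\<eta> = \<epsilon> / (M + 1)"
  have \<eta>: "\<eta> > 0" "M * \<eta> < \<epsilon>"
    using \<open>0 \<le> M\<close> \<epsilon> unfolding \<eta>_def by (simp_all add: field_simps)
  have "\<psi> \<in> U" if \<psi>: "\<psi> \<in> ?S" and dist: "lip_dist V L \<phi> \<psi> < ereal \<eta>" for \<psi>
  proof -
    have "\<bar>\<psi> a - \<phi> a\<bar> < \<epsilon>" if "a \<in> G" for a
    proof -
      have "\<bar>\<psi> a - \<phi> a\<bar> = \<bar>\<phi> a - \<psi> a\<bar>" by (rule abs_minus_commute)
      also have "\<dots> \<le> L a * \<eta>" using state_diff_le_seminorm[OF V L ker \<phi> \<psi> _ dist] that G by blast
      also have "\<dots> \<le> M * \<eta>" using LM[OF that] \<eta> by (simp add: mult_right_mono)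
      finally show ?thesis using \<eta> by simp
    qed
    then show ?thesis using nbhd \<psi> by blast
  qed
  then show "\<exists>\<eta>>0. {\<psi>\<in>?S. lip_dist V L \<phi> \<psi> < ereal \<eta>} \<subseteq> U" using \<eta> by blast
qed

lemma metric_open_imp_weak_star_open:
  fixes b :: "'i::finite \<Rightarrow> 'v"
  assumes b: "range b \<subseteq> V"
    and bound: "\<And>\<phi> \<psi>. \<phi> \<in> S \<Longrightarrow> \<psi> \<in> S \<Longrightarrow>
                  lip_dist V L \<phi> \<psi> \<le> ereal (C * (\<Sum>i\<in>UNIV. \<bar>\<phi> (b i) - \<psi> (b i)\<bar>))"
    and U: "metric_open V L S U"
  shows "weak_star_open V S U"
  unfolding weak_star_open_def
proof (intro conjI ballI)
  show "U \<subseteq> S" using U unfolding metric_open_def by blast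
  fix \<phi> assume "\<phi> \<in> U"
  then have \<phi>: "\<phi> \<in> S" using U unfolding metric_open_def by blast
  obtain \<epsilon> where \<epsilon>: "\<epsilon> > 0" and ball: "{\<psi>\<in>S. lip_dist V L \<phi> \<psi> < ereal \<epsilon>} \<subseteq> U"
    using U \<open>\<phi> \<in> U\<close> unfolding metric_open_def by blast
  define K where "K = \<bar>C\<bar> * CARD('i)"
  define \<delta> where "\<delta> = \<epsilon> / (K + 1)"
  have "0 \<le> K" unfolding K_def by simp
  then have \<delta>: "\<delta> > 0" "K * \<delta> < \<epsilon>" using \<epsilon> unfolding \<delta>_def by (simp_all add: field_simps)
  have "{\<psi>\<in>S. \<forall>a\<in>range b. \<bar>\<psi> a - \<phi> a\<bar> < \<delta>} \<subseteq> U"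
  proof (intro subsetI, elim CollectE conjE)
    fix \<psi> assume \<psi>: "\<psi> \<in> S" and close: "\<forall>a\<in>range b. \<bar>\<psi> a - \<phi> a\<bar> < \<delta>"
    let ?sum = "\<Sum>i\<in>UNIV. \<bar>\<phi> (b i) - \<psi> (b i)\<bar>"
    have "?sum \<le> CARD('i) * \<delta>"
      using sum_bounded_above[of UNIV "\<lambda>i. \<bar>\<phi> (b i) - \<psi> (b i)\<bar>" \<delta>] close
      by (simp add: abs_minus_commute less_imp_le)
    have "C * ?sum \<le> \<bar>C\<bar> * ?sum" by (intro mult_right_mono) (simp_all add: sum_nonneg)
    also have "\<dots> \<le> \<bar>C\<bar> * (CARD('i) * \<delta>)" by (intro mult_left_mono) (fact, simp)
    also have "\<dots> < \<epsilon>" using \<delta> by (simp add: K_def mult.assoc)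
    finally have "ereal (C * ?sum) < ereal \<epsilon>" by simp
    with bound[OF \<phi> \<psi>] have "lip_dist V L \<phi> \<psi> < ereal \<epsilon>" by (rule le_less_trans)
    then show "\<psi> \<in> U" using ball \<psi> by blast
  qed
  then show "\<exists>G. finite G \<and> G \<subseteq> V \<and> (\<exists>\<delta>>0. {\<psi>\<in>S. \<forall>a\<in>G. \<bar>\<psi> a - \<phi> a\<bar> < \<delta>} \<subseteq> U)"
    using b \<delta>(1) by (intro exI[of _ "range b"] conjI exI[of _ \<delta>]) simp_all
qed

lemma lip_dist_le_sum_diffs:
  assumes V: "subspace V" "e \<in> V" and b: "range b \<subseteq> V"
    and bounded: "lip_ball_bounded V e L b C"
    and \<phi>: "\<phi> \<in> state_space V pos e" and \<psi>: "\<psi> \<in> state_space V pos e"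
  shows "lip_dist V L \<phi> \<psi> \<le> ereal (C * (\<Sum>i\<in>UNIV. \<bar>\<phi> (b i) - \<psi> (b i)\<bar>))"
proof (rule lip_dist_le)
  fix a assume "a \<in> V" "L a \<le> 1"
  then obtain t c where a: "a = t *\<^sub>R e + (\<Sum>i\<in>UNIV. c i *\<^sub>R b i)" and c: "\<And>i. \<bar>c i\<bar> \<le> C"
    using bounded unfolding lip_ball_bounded_def by blast
  have expand: "\<xi> a = t + (\<Sum>i\<in>UNIV. c i * \<xi> (b i))" if "\<xi> \<in> state_space V pos e" for \<xi>
  proof -
    have lin: "linear_on V \<xi>" using state_space_linear_on[OF that] .
    have "(\<Sum>i\<in>UNIV. c i *\<^sub>R b i) \<in> V"
      using b by (intro subspace_sum[OF V(1)] subspace_scale[OF V(1)]) auto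
    then have "\<xi> a = t * \<xi> e + \<xi> (\<Sum>i\<in>UNIV. c i *\<^sub>R b i)"
      using linear_on_add[OF lin subspace_scale[OF V]] linear_on_scaleR[OF lin V(2)]
      unfolding a by simp
    then show ?thesis
      using linear_on_sum_scaleR[OF lin V(1), of UNIV b c] b state_space_unit[OF that] by auto
  qed
  have "\<bar>\<phi> a - \<psi> a\<bar> = \<bar>\<Sum>i\<in>UNIV. c i * (\<phi> (b i) - \<psi> (b i))\<bar>"
    by (simp add: expand[OF \<phi>] expand[OF \<psi>] sum_subtractf right_diff_distrib)
  also have "\<dots> \<le> (\<Sum>i\<in>UNIV. \<bar>c i\<bar> * \<bar>\<phi> (b i) - \<psi> (b i)\<bar>)"
    by (rule order_trans[OF sum_abs]) (simp add: abs_mult)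
  also have "\<dots> \<le> C * (\<Sum>i\<in>UNIV. \<bar>\<phi> (b i) - \<psi> (b i)\<bar>)"
    by (simp add: sum_distrib_left sum_mono mult_right_mono c)
  finally show "\<bar>\<phi> a - \<psi> a\<bar> \<le> C * (\<Sum>i\<in>UNIV. \<bar>\<phi> (b i) - \<psi> (b i)\<bar>)" .
qed

theorem is_lip_norm_if_lip_ball_bounded:
  assumes V: "subspace V" "e \<in> V" and b: "range b \<subseteq> V" and L: "is_seminorm_on V L"
    and ker: "\<forall>a\<in>V. L a = 0 \<longleftrightarrow> (\<exists>t. a = t *\<^sub>R e)"
    and bounded: "lip_ball_bounded V e L b C"
  shows "is_lip_norm V pos e L"
proof -
  let ?S = "state_space V pos e"
  note bound = lip_dist_le_sum_diffs[OF V b bounded]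
  have "lip_dist V L \<mu> \<nu> < \<infinity>" if "\<mu> \<in> ?S" "\<nu> \<in> ?S" for \<mu> \<nu>
    using bound[OF that] by (rule le_less_trans) simp
  moreover have "weak_star_open V ?S U \<longleftrightarrow> metric_open V L ?S U" for U
    using weak_star_open_imp_metric_open[OF V L ker] metric_open_imp_weak_star_open[OF b bound]
    by (rule iffI)
  ultimately show ?thesis using L ker unfolding is_lip_norm_def by blast
qed

lemma hausdorff_dist_le:
  assumes "\<And>\<mu>. \<mu> \<in> S1 \<Longrightarrow> \<exists>\<nu>\<in>S2. d \<mu> \<nu> \<le> r"
    and "\<And>\<nu>. \<nu> \<in> S2 \<Longrightarrow> \<exists>\<mu>\<in>S1. d \<mu> \<nu> \<le> r"
  shows "hausdorff_dist d S1 S2 \<le> r"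
  unfolding hausdorff_dist_def
  using assms by (intro max.boundedI SUP_least) (meson INF_lower2)+

section \<open>The Lipschitz and off-diagonal seminorms\<close>

lemma finite_set_of_pairs: "finite {g x y | x y. P x y}" for g :: "'a::finite \<Rightarrow> 'b::finite \<Rightarrow> 'c"
  by (rule finite_subset[of _ "(\<lambda>(x, y). g x y) ` UNIV"]) auto

lemma Sup_insert_0_nonneg: "finite S \<Longrightarrow> 0 \<le> Sup (insert 0 S)" for S :: "real set"
  by (intro cSup_upper) auto

lemma Sup_insert_0_upper: "finite S \<Longrightarrow> x \<in> S \<Longrightarrow> x \<le> Sup (insert 0 S)" for S :: "real set"
  by (intro cSup_upper) auto

lemma Sup_insert_0_least: "0 \<le> M \<Longrightarrow> (\<And>x. x \<in> S \<Longrightarrow> x \<le> M) \<Longrightarrow> Sup (insert 0 S) \<le> M"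
  for S :: "real set"
  by (intro cSup_least) auto

lemma off_diag_norm_nonneg: "0 \<le> off_diag_norm A"
  unfolding off_diag_norm_def by (rule Sup_insert_0_nonneg[OF finite_set_of_pairs])

lemma norm_entry_le_off_diag_norm: "i \<noteq> j \<Longrightarrow> cmod (A $ i $ j) \<le> off_diag_norm A"
  unfolding off_diag_norm_def by (rule Sup_insert_0_upper[OF finite_set_of_pairs]) auto

lemma off_diag_norm_le:
  "0 \<le> M \<Longrightarrow> (\<And>i j. i \<noteq> j \<Longrightarrow> cmod (A $ i $ j) \<le> M) \<Longrightarrow> off_diag_norm A \<le> M"
  unfolding off_diag_norm_def by (rule Sup_insert_0_least) auto

lemma is_seminorm_off_diag_norm: "is_seminorm_on V off_diag_norm"
proof (rule is_seminorm_onI)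
  fix A B :: "complex^'n^'n"
  show "off_diag_norm (A + B) \<le> off_diag_norm A + off_diag_norm B"
  proof (rule off_diag_norm_le)
    fix i j :: 'n assume "i \<noteq> j"
    then show "cmod ((A + B) $ i $ j) \<le> off_diag_norm A + off_diag_norm B"
      using norm_triangle_ineq[of "A $ i $ j" "B $ i $ j"]
        norm_entry_le_off_diag_norm[of i j A] norm_entry_le_off_diag_norm[of i j B] by simp
  qed (simp add: off_diag_norm_nonneg)
  fix c
  show "off_diag_norm (c *\<^sub>R A) \<le> \<bar>c\<bar> * off_diag_norm A"
    by (rule off_diag_norm_le)
      (simp_all add: off_diag_norm_nonneg mult_left_mono norm_entry_le_off_diag_norm)
qed (rule off_diag_norm_nonneg)

lemma lipschitz_seminorm_nonneg: "0 \<le> lipschitz_seminorm d f"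
  unfolding lipschitz_seminorm_def by (rule Sup_insert_0_nonneg[OF finite_set_of_pairs])

lemma lipschitz_seminorm_upper:
  "x \<noteq> y \<Longrightarrow> \<bar>f $ x - f $ y\<bar> / d x y \<le> lipschitz_seminorm d f"
  unfolding lipschitz_seminorm_def by (rule Sup_insert_0_upper[OF finite_set_of_pairs]) auto

locale finite_metric =
  fixes d :: "'n::finite \<Rightarrow> 'n \<Rightarrow> real"
  assumes d_eq_0_iff: "\<forall>x y. d x y = 0 \<longleftrightarrow> x = y"
    and d_commute: "\<forall>x y. d x y = d y x"
    and d_triangle: "\<forall>x y z. d x z \<le> d x y + d y z"
begin

lemma d_self [simp]: "d x x = 0"
  using d_eq_0_iff by simp

lemma d_nonneg: "0 \<le> d x y"
proof -
  have "0 = d x x" by simp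
  also have "\<dots> \<le> d x y + d y x" using d_triangle by blast
  also have "\<dots> = 2 * d x y" using d_commute by simp
  finally show ?thesis by simp
qed

lemma d_pos: "x \<noteq> y \<Longrightarrow> 0 < d x y"
  using d_nonneg[of x y] d_eq_0_iff by (simp add: less_le)

definition diam :: real where
  "diam = Max (case_prod d ` UNIV)"

lemma d_le_diam: "d x y \<le> diam"
  unfolding diam_def by (rule Max_ge) (auto intro: image_eqI[of _ _ "(x, y)"])

lemma diam_nonneg: "0 \<le> diam"
  using d_nonneg order_trans d_le_diam by blast

lemma abs_diff_le_lipschitz_seminorm: "\<bar>f $ x - f $ y\<bar> \<le> lipschitz_seminorm d f * d x y"
proof (cases "x = y")
  case False
  then show ?thesis
    using lipschitz_seminorm_upper[OF False, of f d] d_pos[OF False] by (simp add: divide_le_eq)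
qed simp

lemma lipschitz_seminorm_le:
  assumes "0 \<le> M" "\<And>x y. \<bar>f $ x - f $ y\<bar> \<le> M * d x y"
  shows "lipschitz_seminorm d f \<le> M"
  unfolding lipschitz_seminorm_def
proof (rule Sup_insert_0_least)
  fix r assume "r \<in> {\<bar>f $ x - f $ y\<bar> / d x y | x y. x \<noteq> y}"
  then show "r \<le> M" using assms(2) d_pos by (auto simp: divide_le_eq)
qed (fact assms(1))

lemma is_seminorm_lipschitz_seminorm: "is_seminorm_on V (lipschitz_seminorm d)"
proof (rule is_seminorm_onI)
  fix f g :: "real^'n"
  show "lipschitz_seminorm d (f + g) \<le> lipschitz_seminorm d f + lipschitz_seminorm d g"
  proof (rule lipschitz_seminorm_le)
    fix x y
    have "\<bar>(f + g) $ x - (f + g) $ y\<bar> \<le> \<bar>f $ x - f $ y\<bar> + \<bar>g $ x - g $ y\<bar>" by simp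
    also have "\<dots> \<le> (lipschitz_seminorm d f + lipschitz_seminorm d g) * d x y"
      using abs_diff_le_lipschitz_seminorm[of f x y] abs_diff_le_lipschitz_seminorm[of g x y]
      by (simp add: distrib_right)
    finally show "\<bar>(f + g) $ x - (f + g) $ y\<bar> \<le> \<dots>" .
  qed (simp add: lipschitz_seminorm_nonneg)
  fix c
  show "lipschitz_seminorm d (c *\<^sub>R f) \<le> \<bar>c\<bar> * lipschitz_seminorm d f"
  proof (rule lipschitz_seminorm_le)
    fix x y
    have "\<bar>(c *\<^sub>R f) $ x - (c *\<^sub>R f) $ y\<bar> = \<bar>c\<bar> * \<bar>f $ x - f $ y\<bar>"
      by (simp add: abs_mult[symmetric] right_diff_distrib)
    also have "\<dots> \<le> \<bar>c\<bar> * lipschitz_seminorm d f * d x y"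
      using abs_diff_le_lipschitz_seminorm[of f x y] by (simp add: mult_left_mono mult.assoc)
    finally show "\<bar>(c *\<^sub>R f) $ x - (c *\<^sub>R f) $ y\<bar> \<le> \<dots>" .
  qed (simp add: lipschitz_seminorm_nonneg)
qed (rule lipschitz_seminorm_nonneg)

lemma lipschitz_seminorm_eq_0_iff: "lipschitz_seminorm d f = 0 \<longleftrightarrow> (\<exists>t. f = t *\<^sub>R unitC)"
proof
  assume "lipschitz_seminorm d f = 0"
  then have "f $ x = f $ y" for x y using abs_diff_le_lipschitz_seminorm[of f x y] by simp
  then have "f = f $ undefined *\<^sub>R unitC" by (simp add: vec_eq_iff unitC_def)
  then show "\<exists>t. f = t *\<^sub>R unitC" ..
next
  assume "\<exists>t. f = t *\<^sub>R unitC"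
  then obtain t where "f = t *\<^sub>R unitC" ..
  then have "lipschitz_seminorm d f \<le> 0" by (intro lipschitz_seminorm_le) (simp_all add: unitC_def)
  then show "lipschitz_seminorm d f = 0" using lipschitz_seminorm_nonneg antisym by blast
qed

end

section \<open>Hermitian matrices\<close>

lemma sum_sum_delta:
  "(\<Sum>p\<in>UNIV. \<Sum>q\<in>UNIV. if r = p \<and> s = q then f p q else 0) = (f r s :: 'a::comm_monoid_add)"
  for r :: "'m::finite" and s :: "'n::finite"
proof -
  have "(\<Sum>p\<in>UNIV. \<Sum>q\<in>UNIV. if r = p \<and> s = q then f p q else 0)
      = (\<Sum>p\<in>UNIV. if r = p then f p s else 0)"
    by (intro sum.cong refl) (auto simp: sum.delta)
  also have "\<dots> = f r s" by (simp add: sum.delta)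
  finally show ?thesis .
qed

lemma sum_sum_delta_swap:
  "(\<Sum>p\<in>UNIV. \<Sum>q\<in>UNIV. if r = q \<and> s = p then f p q else 0) = (f s r :: 'a::comm_monoid_add)"
  for r :: "'n::finite" and s :: "'m::finite"
  using sum_sum_delta[of s r f] by (simp add: conj_commute)

lemma sum_sum_delta_left:
  "(\<Sum>i\<in>UNIV. \<Sum>j\<in>UNIV. if i = r \<and> j = s then f i j else 0) = (f r s :: 'a::comm_monoid_add)"
  for r :: "'m::finite" and s :: "'n::finite"
  using sum_sum_delta[of r s f] by (simp add: eq_commute)

lemma herm_entry: "A \<in> herm \<Longrightarrow> A $ i $ j = cnj (A $ j $ i)"
  unfolding herm_def by blast

lemma subspace_herm: "subspace herm"
  unfolding subspace_def
proof (intro conjI ballI allI)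
  fix A B :: "complex^'n^'n" and c :: real
  assume A: "A \<in> herm" and B: "B \<in> herm"
  show "A + B \<in> herm" unfolding herm_def
  proof (intro CollectI allI)
    fix i j
    show "(A + B) $ i $ j = cnj ((A + B) $ j $ i)"
      using herm_entry[OF A, of i j] herm_entry[OF B, of i j] by simp
  qed
  show "c *\<^sub>R A \<in> herm" unfolding herm_def
  proof (intro CollectI allI)
    fix i j
    show "(c *\<^sub>R A) $ i $ j = cnj ((c *\<^sub>R A) $ j $ i)" using herm_entry[OF A, of i j] by simp
  qed
qed (simp add: herm_def)

lemma mat_1_herm: "mat 1 \<in> herm"
  by (simp add: herm_def mat_def)

lemma herm_diag_real: assumes "A \<in> herm" shows "Im (A $ i $ i) = 0"
proof -
  have "A $ i $ i = cnj (A $ i $ i)" using herm_entry[OF assms] .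
  then show ?thesis by (simp add: complex_eq_iff)
qed

definition herm_unit :: "'n::finite \<Rightarrow> 'n \<Rightarrow> complex \<Rightarrow> complex^'n^'n" where
  "herm_unit p q a =
     (\<chi> r s. (if r = p \<and> s = q then a else 0) + (if r = q \<and> s = p then cnj a else 0))"

lemma herm_unit_entry:
  "herm_unit p q a $ r $ s =
     (if r = p \<and> s = q then a else 0) + (if r = q \<and> s = p then cnj a else 0)"
  by (simp add: herm_unit_def)

lemma herm_unit_herm: "herm_unit p q a \<in> herm"
  unfolding herm_def mem_Collect_eq
proof (intro allI)
  fix r s
  show "herm_unit p q a $ r $ s = cnj (herm_unit p q a $ s $ r)"
    unfolding herm_unit_entry
    by (cases "r = p"; cases "s = q"; cases "r = q"; cases "s = p") simp_all
qed

lemma herm_unit_0 [simp]: "herm_unit p q 0 = 0"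
  by (simp add: herm_unit_def vec_eq_iff)

lemma herm_unit_uminus: "herm_unit p q (- a) = - herm_unit p q a"
  unfolding vec_eq_iff
proof (intro allI)
  fix r s
  show "herm_unit p q (- a) $ r $ s = (- herm_unit p q a) $ r $ s"
    unfolding vector_uminus_component herm_unit_entry
    by (cases "r = p"; cases "s = q"; cases "r = q"; cases "s = p") simp_all
qed

lemma herm_unit_Re_Im:
  "(Re a / 2) *\<^sub>R herm_unit p q 1 + (Im a / 2) *\<^sub>R herm_unit p q \<i> = (1/2) *\<^sub>R herm_unit p q a"
  unfolding vec_eq_iff
proof (intro allI)
  fix r s
  show "((Re a / 2) *\<^sub>R herm_unit p q 1 + (Im a / 2) *\<^sub>R herm_unit p q \<i>) $ r $ s
      = ((1/2) *\<^sub>R herm_unit p q a) $ r $ s"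
    unfolding vector_add_component vector_scaleR_component herm_unit_entry
    by (cases "r = p"; cases "s = q"; cases "r = q"; cases "s = p") (simp_all add: complex_eq_iff)
qed

text \<open>The factor 1/2: every entry is produced twice, by (p, q) and by (q, p).\<close>

lemma herm_eq_sum_herm_unit:
  assumes "A \<in> herm"
  shows "A = (\<Sum>p\<in>UNIV. \<Sum>q\<in>UNIV. (1/2) *\<^sub>R herm_unit p q (A $ p $ q))"
proof -
  have "(\<Sum>p\<in>UNIV. \<Sum>q\<in>UNIV. (1/2) *\<^sub>R herm_unit p q (A $ p $ q)) $ r $ s
      = (\<Sum>p\<in>UNIV. \<Sum>q\<in>UNIV. (1/2) *\<^sub>R ((if r = p \<and> s = q then A $ p $ q else 0)
                                    + (if r = q \<and> s = p then cnj (A $ p $ q) else 0)))" for r s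
    by (simp only: sum_component vector_scaleR_component herm_unit_entry)
  also have "\<dots> r s = (1/2) *\<^sub>R ((\<Sum>p\<in>UNIV. \<Sum>q\<in>UNIV. if r = p \<and> s = q then A $ p $ q else 0)
         + (\<Sum>p\<in>UNIV. \<Sum>q\<in>UNIV. if r = q \<and> s = p then cnj (A $ p $ q) else 0))" for r s
    by (simp only: scaleR_right.sum scaleR_right_distrib sum.distrib)
  also have "\<dots> r s = A $ r $ s" for r s
    using herm_entry[OF assms, of s r] unfolding sum_sum_delta sum_sum_delta_swap
    by (simp add: complex_eq_iff)
  finally show ?thesis by (simp add: vec_eq_iff)
qed

text \<open>A redundant real spanning family of the Hermitian matrices, indexed by a finite type.\<close>

definition herm_gen :: "'n \<times> 'n \<times> bool \<Rightarrow> complex^'n::finite^'n" where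
  "herm_gen = (\<lambda>(p, q, imag). herm_unit p q (if imag then \<i> else 1))"

definition herm_coord :: "complex^'n::finite^'n \<Rightarrow> 'n \<times> 'n \<times> bool \<Rightarrow> real" where
  "herm_coord A = (\<lambda>(p, q, imag). (if imag then Im (A $ p $ q) else Re (A $ p $ q)) / 2)"

lemma herm_gen_herm: "herm_gen j \<in> herm"
  by (simp add: herm_gen_def herm_unit_herm split: prod.split)

lemma herm_eq_sum_herm_gen:
  assumes "A \<in> herm"
  shows "A = (\<Sum>j\<in>UNIV. herm_coord A j *\<^sub>R herm_gen j)"
proof -
  have "(\<Sum>j\<in>UNIV. herm_coord A j *\<^sub>R herm_gen j)
      = (\<Sum>p\<in>UNIV. \<Sum>q\<in>UNIV. \<Sum>imag\<in>UNIV. herm_coord A (p, q, imag) *\<^sub>R herm_gen (p, q, imag))"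
    by (simp add: sum.cartesian_product UNIV_Times_UNIV[symmetric] del: UNIV_Times_UNIV)
  also have "\<dots> = (\<Sum>p\<in>UNIV. \<Sum>q\<in>UNIV. (1/2) *\<^sub>R herm_unit p q (A $ p $ q))"
    by (simp add: UNIV_bool herm_coord_def herm_gen_def herm_unit_Re_Im)
  finally show ?thesis using herm_eq_sum_herm_unit[OF assms] by simp
qed

lemma abs_herm_coord_le:
  assumes "\<And>p q. cmod (A $ p $ q) \<le> C"
  shows "\<bar>herm_coord A j\<bar> \<le> C"
proof -
  obtain p q re where j: "j = (p, q, re)" by (cases j) auto
  have "\<bar>herm_coord A j\<bar> \<le> cmod (A $ p $ q) / 2"
    unfolding j herm_coord_def using abs_Re_le_cmod abs_Im_le_cmod by simp
  also have "\<dots> \<le> C" using assms[of p q] norm_ge_zero[of "A $ p $ q"] by linarith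
  finally show ?thesis .
qed

definition diag_mat :: "real^'n::finite \<Rightarrow> complex^'n^'n" where
  "diag_mat f = (\<chi> i j. if i = j then complex_of_real (f $ i) else 0)"

lemma diag_mat_herm: "diag_mat f \<in> herm"
  by (simp add: herm_def diag_mat_def)

lemma diag_map_diag_mat [simp]: "diag_map (diag_mat f) = f"
  by (simp add: diag_map_def diag_mat_def vec_eq_iff)

lemma diag_mat_unitC: "diag_mat unitC = mat 1"
  by (simp add: diag_mat_def unitC_def mat_def vec_eq_iff)

lemma diag_map_mat_1: "diag_map (mat 1) = unitC"
  by (simp add: diag_map_def unitC_def mat_def vec_eq_iff)

lemma linear_diag_map: "linear diag_map"
  by (rule linearI) (simp_all add: diag_map_def vec_eq_iff)

lemma linear_diag_mat: "linear diag_mat"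
proof (rule linearI)
  fix f g :: "real^'n" and c :: real
  show "diag_mat (f + g) = diag_mat f + diag_mat g" by (simp add: diag_mat_def vec_eq_iff)
  have "diag_mat (c *\<^sub>R f) $ i $ j = (c *\<^sub>R diag_mat f) $ i $ j" for i j
    by (simp add: diag_mat_def complex_eq_iff)
  then show "diag_mat (c *\<^sub>R f) = c *\<^sub>R diag_mat f" by (simp add: vec_eq_iff)
qed

lemma off_diag_norm_diag_mat: "off_diag_norm (diag_mat f) = 0"
  using off_diag_norm_le[of 0 "diag_mat f"] off_diag_norm_nonneg[of "diag_mat f"]
  by (simp add: diag_mat_def)

lemma psd_diag_nonneg:
  fixes A :: "complex^'n::finite^'n"
  assumes "psd A"
  shows "0 \<le> Re (A $ i $ i)"
proof -
  have "(\<Sum>k\<in>UNIV. \<Sum>j\<in>UNIV. cnj (axis i 1 $ k) * A $ k $ j * axis i 1 $ j)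
      = (\<Sum>k\<in>UNIV. \<Sum>j\<in>UNIV. if i = k \<and> i = j then A $ k $ j else 0)"
    by (intro sum.cong refl) (auto simp: axis_def)
  also have "\<dots> = A $ i $ i" by (rule sum_sum_delta)
  finally show ?thesis using assms unfolding psd_def by (metis (no_types))
qed

lemma psd_diag_mat:
  fixes f :: "real^'n::finite"
  assumes "posC f"
  shows "psd (diag_mat f)"
  unfolding psd_def
proof
  fix v :: "complex^'n"
  have "(\<Sum>j\<in>UNIV. cnj (v $ i) * diag_mat f $ i $ j * v $ j)
      = complex_of_real (f $ i) * (cnj (v $ i) * v $ i)" for i
  proof -
    have "(\<Sum>j\<in>UNIV. cnj (v $ i) * diag_mat f $ i $ j * v $ j)
        = (\<Sum>j\<in>UNIV. if i = j then complex_of_real (f $ i) * (cnj (v $ i) * v $ i) else 0)"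
      by (intro sum.cong refl) (simp add: diag_mat_def)
    then show ?thesis by simp
  qed
  moreover have "0 \<le> (\<Sum>i\<in>UNIV. f $ i * ((Re (v $ i))\<^sup>2 + (Im (v $ i))\<^sup>2))"
    using assms unfolding posC_def by (simp add: sum_nonneg)
  ultimately show "0 \<le> Re (\<Sum>i\<in>UNIV. \<Sum>j\<in>UNIV. cnj (v $ i) * diag_mat f $ i $ j * v $ j)"
    by (simp add: Re_sum power2_eq_square)
qed

lemma Re_cnj_mult_self: "Re (cnj z * z) = (cmod z)\<^sup>2"
  by (metis Re_complex_of_real complex_norm_square mult.commute)

lemma psd_herm_unit:
  fixes p q :: "'n::finite"
  assumes "p \<noteq> q"
  shows "psd (cmod a *\<^sub>R mat 1 + herm_unit p q a)"
  unfolding psd_def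
proof
  fix v :: "complex^'n"
  let ?c = "cmod a" and ?w = "cnj (v $ p) * a * v $ q"
  have "(\<Sum>i\<in>UNIV. \<Sum>j\<in>UNIV. cnj (v $ i) * (?c *\<^sub>R mat 1 + herm_unit p q a) $ i $ j * v $ j)
      = (\<Sum>i\<in>UNIV. \<Sum>j\<in>UNIV. if i = j then ?c *\<^sub>R (cnj (v $ i) * v $ j) else 0)
        + ((\<Sum>i\<in>UNIV. \<Sum>j\<in>UNIV. if i = p \<and> j = q then cnj (v $ i) * a * v $ j else 0)
        + (\<Sum>i\<in>UNIV. \<Sum>j\<in>UNIV. if i = q \<and> j = p then cnj (v $ i) * cnj a * v $ j else 0))"
    unfolding sum.distrib[symmetric]
    by (intro sum.cong refl) (auto simp: herm_unit_entry mat_def algebra_simps)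
  also have "\<dots> = (\<Sum>i\<in>UNIV. ?c *\<^sub>R (cnj (v $ i) * v $ i)) + (?w + cnj ?w)"
    unfolding sum_sum_delta_left by (simp add: sum.delta mult_ac)
  finally have "Re (\<Sum>i\<in>UNIV. \<Sum>j\<in>UNIV. cnj (v $ i) * (?c *\<^sub>R mat 1 + herm_unit p q a) $ i $ j * v $ j)
      = Re (\<Sum>i\<in>UNIV. ?c *\<^sub>R (cnj (v $ i) * v $ i)) + Re (?w + cnj ?w)"
    by (simp only: plus_complex.sel)
  also have "Re (\<Sum>i\<in>UNIV. ?c *\<^sub>R (cnj (v $ i) * v $ i)) = ?c * (\<Sum>i\<in>UNIV. (cmod (v $ i))\<^sup>2)"
    by (simp only: Re_sum scaleR_complex.sel Re_cnj_mult_self sum_distrib_left)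
  also have "Re (?w + cnj ?w) = 2 * Re ?w"
    by (simp only: complex_add_cnj Re_complex_of_real)
  txt \<open>The form is at least |a| (|v_p| - |v_q|)^2.\<close>
  moreover have "?c * ((cmod (v $ p))\<^sup>2 + (cmod (v $ q))\<^sup>2) \<le> ?c * (\<Sum>i\<in>UNIV. (cmod (v $ i))\<^sup>2)"
    using sum_mono2[of UNIV "{p, q}" "\<lambda>i. (cmod (v $ i))\<^sup>2"] assms
    by (intro mult_left_mono) simp_all
  moreover have "- Re ?w \<le> cmod (v $ p) * ?c * cmod (v $ q)"
    using abs_Re_le_cmod[of ?w] by (simp add: norm_mult)
  moreover have "0 \<le> ?c * (cmod (v $ p) - cmod (v $ q))\<^sup>2" by simp
  ultimately show
    "0 \<le> Re (\<Sum>i\<in>UNIV. \<Sum>j\<in>UNIV. cnj (v $ i) * (?c *\<^sub>R mat 1 + herm_unit p q a) $ i $ j * v $ j)"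
    by (simp add: power2_eq_square algebra_simps)
qed

lemma herm_eq_diag_mat_if_off_diag_norm_0:
  assumes "A \<in> herm" "off_diag_norm A = 0"
  shows "A = diag_mat (diag_map A)"
proof -
  have "A $ i $ j = diag_mat (diag_map A) $ i $ j" for i j
  proof (cases "i = j")
    case True
    then show ?thesis using herm_diag_real[OF assms(1)]
      by (simp add: diag_mat_def diag_map_def complex_eq_iff)
  next
    case False
    then show ?thesis using norm_entry_le_off_diag_norm[OF False, of A] assms(2)
      by (simp add: diag_mat_def)
  qed
  then show ?thesis by (simp add: vec_eq_iff)
qed

lemma scalar_mat_eq_diag_mat: "t *\<^sub>R mat 1 = diag_mat (t *\<^sub>R unitC)"
  by (simp add: linear_scale[OF linear_diag_mat] diag_mat_unitC)

section \<open>States of C(X) and of M_n\<close>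

lemma state_herm_unit_le:
  assumes \<nu>: "is_state herm psd (mat 1) \<nu>" and "p \<noteq> q"
  shows "\<bar>\<nu> (herm_unit p q a)\<bar> \<le> cmod a"
proof -
  have lin: "linear_on herm \<nu>" using is_state_linear_on[OF \<nu>] .
  have pos: "0 \<le> cmod b + \<nu> (herm_unit p q b)" for b
  proof -
    have "cmod b *\<^sub>R mat 1 + herm_unit p q b \<in> herm"
      by (intro subspace_add[OF subspace_herm] subspace_scale[OF subspace_herm]
          mat_1_herm herm_unit_herm)
    then have "0 \<le> \<nu> (cmod b *\<^sub>R mat 1 + herm_unit p q b)"
      using \<nu> psd_herm_unit[OF \<open>p \<noteq> q\<close>] unfolding is_state_def by blast
    also have "\<dots> = cmod b + \<nu> (herm_unit p q b)"
      using linear_on_add[OF lin subspace_scale[OF subspace_herm mat_1_herm] herm_unit_herm]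
        is_state_scaleR_unit[OF \<nu> mat_1_herm] by simp
    finally show ?thesis .
  qed
  have "\<nu> (herm_unit p q (- a)) = - \<nu> (herm_unit p q a)"
    using linear_on_scaleR[OF lin herm_unit_herm, of "-1"] by (simp add: herm_unit_uminus)
  then show ?thesis using pos[of a] pos[of "- a"] by simp
qed

lemma sum_off_diagonal_const:
  "(\<Sum>p\<in>(UNIV::'n::finite set). \<Sum>q\<in>UNIV. if p = q then 0 else k)
    = (real CARD('n)^2 - real CARD('n)) * k"
proof -
  have "(\<Sum>q\<in>(UNIV::'n set). if p = q then 0 else k) = real CARD('n) * k - k" for p
  proof -
    have "(\<Sum>q\<in>(UNIV::'n set). if p = q then 0 else k)
        = (\<Sum>q\<in>(UNIV::'n set). k - (if p = q then k else 0))"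
      by (intro sum.cong) auto
    also have "\<dots> = real CARD('n) * k - k" by (simp add: sum_subtractf sum.delta)
    finally show ?thesis .
  qed
  then have "(\<Sum>p\<in>(UNIV::'n set). \<Sum>q\<in>UNIV. if p = q then 0 else k)
      = real CARD('n) * (real CARD('n) * k - k)"
    by simp
  then show ?thesis by (simp add: power2_eq_square algebra_simps)
qed

lemma state_off_diag_le:
  fixes A :: "complex^'n::finite^'n"
  assumes \<nu>: "is_state herm psd (mat 1) \<nu>" and A: "A \<in> herm"
  shows "\<bar>\<nu> (A - diag_mat (diag_map A))\<bar> \<le> (real CARD('n)^2 - real CARD('n)) / 2 * off_diag_norm A"
proof -
  let ?B = "A - diag_mat (diag_map A)"
  have lin: "linear_on herm \<nu>" using is_state_linear_on[OF \<nu>] .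
  have B: "?B \<in> herm" using A diag_mat_herm by (rule subspace_diff[OF subspace_herm])
  have B_entry: "A $ p $ q - diag_mat (diag_map A) $ p $ q = (if p = q then 0 else A $ p $ q)"
    for p q
    using herm_diag_real[OF A]
    by (cases "p = q") (simp_all add: diag_mat_def diag_map_def complex_eq_iff)
  have entry_bound:
    "\<bar>(1/2) * \<nu> (herm_unit p q (?B $ p $ q))\<bar> \<le> (1/2) * (if p = q then 0 else off_diag_norm A)"
    for p q
  proof (cases "p = q")
    case True
    then show ?thesis using linear_on_zero[OF lin subspace_herm] by (simp add: B_entry)
  next
    case False
    then show ?thesis
      using state_herm_unit_le[OF \<nu> False, of "A $ p $ q"] norm_entry_le_off_diag_norm[OF False, of A]
      by (simp add: B_entry)
  qed
  have "\<nu> ?B = \<nu> (\<Sum>p\<in>UNIV. \<Sum>q\<in>UNIV. (1/2) *\<^sub>R herm_unit p q (?B $ p $ q))"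
    using arg_cong[OF herm_eq_sum_herm_unit[OF B], of \<nu>] .
  also have "\<dots> = (\<Sum>p\<in>UNIV. \<nu> (\<Sum>q\<in>UNIV. (1/2) *\<^sub>R herm_unit p q (?B $ p $ q)))"
    by (intro linear_on_sum[OF lin subspace_herm] subspace_sum[OF subspace_herm]
        subspace_scale[OF subspace_herm] herm_unit_herm)
  also have "\<dots> = (\<Sum>p\<in>UNIV. \<Sum>q\<in>UNIV. (1/2) * \<nu> (herm_unit p q (?B $ p $ q)))"
    by (intro sum.cong refl linear_on_sum_scaleR[OF lin subspace_herm] herm_unit_herm)
  also have "\<bar>\<dots>\<bar> \<le> (\<Sum>p\<in>UNIV. \<Sum>q\<in>UNIV. \<bar>(1/2) * \<nu> (herm_unit p q (?B $ p $ q))\<bar>)"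
    by (rule order_trans[OF sum_abs]) (intro sum_mono sum_abs)
  also have "\<dots> \<le> (\<Sum>p\<in>(UNIV::'n set). \<Sum>q\<in>UNIV. (1/2) * (if p = q then 0 else off_diag_norm A))"
    by (intro sum_mono entry_bound)
  also have "\<dots> = (real CARD('n)^2 - real CARD('n)) / 2 * off_diag_norm A"
    using sum_off_diagonal_const[where 'n='n, of "off_diag_norm A / 2"]
    by (simp add: if_distrib cong: if_cong)
  finally show ?thesis .
qed

lemma state_abs_le_norm:
  assumes \<mu>: "is_state UNIV posC unitC \<mu>"
  shows "\<bar>\<mu> g\<bar> \<le> norm g"
proof -
  have lin: "linear_on UNIV \<mu>" using is_state_linear_on[OF \<mu>] .
  have "0 \<le> norm g - g $ i" "0 \<le> norm g + g $ i" for i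
    using component_le_norm_cart[of g i] by arith+
  then have "posC (norm g *\<^sub>R unitC - g)" "posC (norm g *\<^sub>R unitC + g)"
    unfolding posC_def unitC_def by simp_all
  then have "0 \<le> \<mu> (norm g *\<^sub>R unitC - g)" "0 \<le> \<mu> (norm g *\<^sub>R unitC + g)"
    using \<mu> unfolding is_state_def by blast+
  moreover have "\<mu> (norm g *\<^sub>R unitC - g) = norm g - \<mu> g" "\<mu> (norm g *\<^sub>R unitC + g) = norm g + \<mu> g"
    using linear_on_diff[OF lin subspace_UNIV] linear_on_add[OF lin]
      is_state_scaleR_unit[OF \<mu> UNIV_I] by simp_all
  ultimately show ?thesis by linarith
qed

lemma is_state_comp_diag_map:
  assumes \<mu>: "is_state UNIV posC unitC \<mu>"
  shows "is_state herm psd (mat 1) (\<lambda>A. if A \<in> herm then \<mu> (diag_map A) else 0)"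
proof -
  have lin: "linear_on UNIV \<mu>" using is_state_linear_on[OF \<mu>] .
  have "0 \<le> \<mu> (diag_map A)" if "psd A" for A
    using \<mu> psd_diag_nonneg[OF that] unfolding is_state_def posC_def diag_map_def by simp
  moreover have "\<mu> (diag_map (mat 1)) = 1"
    using \<mu> unfolding is_state_def diag_map_mat_1 by simp
  ultimately show ?thesis
    using lin mat_1_herm unfolding is_state_def linear_on_def
    by (auto simp: linear_add[OF linear_diag_map] linear_scale[OF linear_diag_map]
        subspace_add[OF subspace_herm] subspace_scale[OF subspace_herm])
qed

lemma is_state_comp_diag_mat:
  assumes \<nu>: "is_state herm psd (mat 1) \<nu>"
  shows "is_state UNIV posC unitC (\<lambda>f. \<nu> (diag_mat f))"
proof -
  have lin: "linear_on herm \<nu>" using is_state_linear_on[OF \<nu>] .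
  show ?thesis
    using \<nu> lin unfolding is_state_def linear_on_def
    by (auto simp: linear_add[OF linear_diag_mat] linear_scale[OF linear_diag_mat] diag_mat_unitC
        diag_mat_herm psd_diag_mat)
qed

section \<open>L_eps is a Lip-norm\<close>

locale finite_metric_eps = finite_metric d for d :: "'n::finite \<Rightarrow> 'n \<Rightarrow> real" +
  fixes \<epsilon> :: real
  assumes eps_pos: "0 < \<epsilon>"
begin

definition off_diag_weight :: real where
  "off_diag_weight = (real CARD('n)^2 - real CARD('n)) / (2 * \<epsilon>)"

lemma L_eps_eq:
  "L_eps d \<epsilon> A = max (lipschitz_seminorm d (diag_map A)) (off_diag_weight * off_diag_norm A)"
  unfolding L_eps_def off_diag_weight_def ..

lemma off_diag_weight_nonneg: "0 \<le> off_diag_weight"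
proof -
  have "real CARD('n) \<le> real CARD('n)^2" by (simp add: power2_eq_square)
  then show ?thesis unfolding off_diag_weight_def using eps_pos by simp
qed

lemma off_diag_weight_ge:
  fixes p q :: 'n
  assumes "p \<noteq> q"
  shows "1 / \<epsilon> \<le> off_diag_weight"
proof -
  have "card {p, q} \<le> CARD('n)" by (rule card_mono) auto
  then have "2 \<le> real CARD('n)" using assms by simp
  then have "2 * 1 \<le> real CARD('n) * (real CARD('n) - 1)" by (intro mult_mono) simp_all
  then have "2 \<le> real CARD('n)^2 - real CARD('n)" by (simp add: power2_eq_square algebra_simps)
  then show ?thesis unfolding off_diag_weight_def using eps_pos by (simp add: field_simps)
qed

lemma is_seminorm_L_eps: "is_seminorm_on V (L_eps d \<epsilon>)"
proof -
  have "is_seminorm_on V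
      (\<lambda>A. max (lipschitz_seminorm d (diag_map A)) (off_diag_weight * off_diag_norm A))"
    using is_seminorm_on_comp_linear[OF is_seminorm_lipschitz_seminorm linear_diag_map]
      is_seminorm_on_scale[OF is_seminorm_off_diag_norm off_diag_weight_nonneg]
    by (rule is_seminorm_on_max)
  then show ?thesis unfolding L_eps_eq .
qed

lemma lipschitz_seminorm_le_L_eps: "lipschitz_seminorm d (diag_map A) \<le> L_eps d \<epsilon> A"
  unfolding L_eps_eq by simp

lemma off_diag_norm_le_L_eps: "off_diag_weight * off_diag_norm A \<le> L_eps d \<epsilon> A"
  unfolding L_eps_eq by simp

lemma L_eps_nonneg: "0 \<le> L_eps d \<epsilon> A"
  using lipschitz_seminorm_nonneg order_trans lipschitz_seminorm_le_L_eps by blast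

lemma L_eps_diag_mat: "L_eps d \<epsilon> (diag_mat f) = lipschitz_seminorm d f"
  unfolding L_eps_eq by (simp add: off_diag_norm_diag_mat lipschitz_seminorm_nonneg)

lemma off_diag_entry_le_eps:
  assumes "L_eps d \<epsilon> A \<le> 1" "p \<noteq> q"
  shows "cmod (A $ p $ q) \<le> \<epsilon>"
proof -
  have "(1 / \<epsilon>) * off_diag_norm A \<le> off_diag_weight * off_diag_norm A"
    using off_diag_weight_ge[OF assms(2)] off_diag_norm_nonneg by (rule mult_right_mono)
  also have "\<dots> \<le> 1" using off_diag_norm_le_L_eps assms(1) by (rule order_trans)
  finally have "off_diag_norm A \<le> \<epsilon>" using eps_pos by (simp add: field_simps)
  then show ?thesis using norm_entry_le_off_diag_norm[OF assms(2)] by (rule order_trans[rotated])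
qed

lemma scaled_off_diag_norm_le_eps:
  assumes "L_eps d \<epsilon> A \<le> 1"
  shows "(real CARD('n)^2 - real CARD('n)) / 2 * off_diag_norm A \<le> \<epsilon>"
proof -
  have "(real CARD('n)^2 - real CARD('n)) / 2 * off_diag_norm A
      = \<epsilon> * (off_diag_weight * off_diag_norm A)"
    unfolding off_diag_weight_def using eps_pos by (simp add: field_simps)
  also have "\<dots> \<le> \<epsilon>"
    using mult_left_mono[OF order_trans[OF off_diag_norm_le_L_eps assms]] eps_pos by simp
  finally show ?thesis .
qed

lemma L_eps_eq_0_iff:
  assumes "A \<in> herm"
  shows "L_eps d \<epsilon> A = 0 \<longleftrightarrow> (\<exists>t. A = t *\<^sub>R mat 1)"
proof
  assume L0: "L_eps d \<epsilon> A = 0"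
  then obtain t where t: "diag_map A = t *\<^sub>R unitC"
    using lipschitz_seminorm_le_L_eps[of A] lipschitz_seminorm_nonneg[of d "diag_map A"]
      lipschitz_seminorm_eq_0_iff by (metis antisym)
  have "off_diag_norm A = 0"
  proof (rule antisym[OF _ off_diag_norm_nonneg])
    show "off_diag_norm A \<le> 0"
    proof (rule off_diag_norm_le)
      fix p q :: 'n assume "p \<noteq> q"
      have "0 < off_diag_weight"
        using off_diag_weight_ge[OF \<open>p \<noteq> q\<close>] eps_pos
        by (meson less_le_trans zero_less_divide_1_iff)
      moreover have "off_diag_weight * off_diag_norm A \<le> 0" using off_diag_norm_le_L_eps L0 by metis
      ultimately have "off_diag_norm A \<le> 0" by (simp add: mult_le_0_iff)
      then show "cmod (A $ p $ q) \<le> 0"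
        using norm_entry_le_off_diag_norm[OF \<open>p \<noteq> q\<close>, of A] by linarith
    qed simp
  qed
  then show "\<exists>t. A = t *\<^sub>R mat 1"
    using herm_eq_diag_mat_if_off_diag_norm_0[OF assms] t scalar_mat_eq_diag_mat by metis
next
  assume "\<exists>t. A = t *\<^sub>R mat 1"
  then show "L_eps d \<epsilon> A = 0"
    using scalar_mat_eq_diag_mat L_eps_diag_mat lipschitz_seminorm_eq_0_iff by metis
qed

lemma norm_entry_minus_scalar_le:
  assumes "A \<in> herm" "L_eps d \<epsilon> A \<le> 1"
  shows "cmod ((A - s *\<^sub>R mat 1) $ p $ q) \<le> diam + \<bar>Re (A $ x $ x) - s\<bar> + \<epsilon>"
proof (cases "p = q")
  case True
  have "\<bar>Re (A $ p $ p) - Re (A $ x $ x)\<bar> \<le> lipschitz_seminorm d (diag_map A) * d p x"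
    using abs_diff_le_lipschitz_seminorm[of "diag_map A" p x] by (simp add: diag_map_def)
  also have "\<dots> \<le> 1 * diam"
    using order_trans[OF lipschitz_seminorm_le_L_eps assms(2)] d_le_diam d_nonneg
      lipschitz_seminorm_nonneg by (intro mult_mono) simp_all
  finally have "cmod ((A - s *\<^sub>R mat 1) $ p $ p) \<le> diam + \<bar>Re (A $ x $ x) - s\<bar>"
    using herm_diag_real[OF assms(1), of p] by (simp add: mat_def cmod_eq_Re)
  then show ?thesis using True eps_pos by simp
next
  case False
  then show ?thesis
    using off_diag_entry_le_eps[OF assms(2) False] diam_nonneg by (simp add: mat_def)
qed

lemma lip_ball_bounded_L_eps: "lip_ball_bounded herm (mat 1) (L_eps d \<epsilon>) herm_gen (diam + \<epsilon>)"
  unfolding lip_ball_bounded_def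
proof (intro ballI impI)
  fix A assume A: "A \<in> herm" and L: "L_eps d \<epsilon> A \<le> 1"
  obtain x :: 'n where True by simp
  define B where "B = A - Re (A $ x $ x) *\<^sub>R mat 1"
  have B: "B \<in> herm"
    unfolding B_def
    by (intro subspace_diff[OF subspace_herm] subspace_scale[OF subspace_herm] A mat_1_herm)
  have "\<bar>herm_coord B j\<bar> \<le> diam + \<epsilon>" for j
    using norm_entry_minus_scalar_le[OF A L, of "Re (A $ x $ x)" _ _ x] unfolding B_def
    by (intro abs_herm_coord_le) simp
  moreover have "A = Re (A $ x $ x) *\<^sub>R mat 1 + (\<Sum>j\<in>UNIV. herm_coord B j *\<^sub>R herm_gen j)"
    using herm_eq_sum_herm_gen[OF B] unfolding B_def by simp
  ultimately show "\<exists>t c. A = t *\<^sub>R mat 1 + (\<Sum>j\<in>UNIV. c j *\<^sub>R herm_gen j) \<and> (\<forall>j. \<bar>c j\<bar> \<le> diam + \<epsilon>)"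
    by blast
qed

theorem is_lip_norm_L_eps: "is_lip_norm herm psd (mat 1) (L_eps d \<epsilon>)"
  using L_eps_eq_0_iff herm_gen_herm
  by (intro is_lip_norm_if_lip_ball_bounded[OF subspace_herm mat_1_herm _ is_seminorm_L_eps _
        lip_ball_bounded_L_eps]) auto

section \<open>Bridge seminorms and the distance estimate\<close>

text \<open>The Euclidean norm on real^'n dominates the sup norm of C(X), which is all that is
  used of it.\<close>

definition bridge_seminorm :: "real \<Rightarrow> (real^'n) \<times> (complex^'n^'n) \<Rightarrow> real" where
  "bridge_seminorm \<gamma> z = max (lipschitz_seminorm d (fst z))
     (max (L_eps d \<epsilon> (snd z)) (norm (fst z - diag_map (snd z)) / \<gamma>))"

lemma bridge_seminorm_ge:
  "lipschitz_seminorm d f \<le> bridge_seminorm \<gamma> (f, A)"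
  "L_eps d \<epsilon> A \<le> bridge_seminorm \<gamma> (f, A)"
  "norm (f - diag_map A) / \<gamma> \<le> bridge_seminorm \<gamma> (f, A)"
  unfolding bridge_seminorm_def by auto

lemma norm_le_if_bridge_seminorm_le_1:
  assumes "0 < \<gamma>" "bridge_seminorm \<gamma> (f, A) \<le> 1"
  shows "norm (f - diag_map A) \<le> \<gamma>"
proof -
  have "norm (f - diag_map A) / \<gamma> \<le> 1" using bridge_seminorm_ge(3) assms(2) by (rule order_trans)
  then show ?thesis using assms(1) by (simp add: divide_le_eq)
qed

lemma is_seminorm_bridge_seminorm:
  assumes "0 < \<gamma>"
  shows "is_seminorm_on V (bridge_seminorm \<gamma>)"
proof -
  have "linear (\<lambda>z :: (real^'n) \<times> (complex^'n^'n). fst z - diag_map (snd z))"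
    by (rule linearI) (simp_all add: linear_add[OF linear_diag_map] linear_scale[OF linear_diag_map]
        scaleR_diff_right)
  then have "is_seminorm_on V (\<lambda>z. (1 / \<gamma>) * norm (fst z - diag_map (snd z)))"
    using assms
    by (intro is_seminorm_on_scale is_seminorm_on_comp_linear[OF is_seminorm_on_norm]) simp_all
  moreover have "is_seminorm_on V (\<lambda>z :: (real^'n) \<times> (complex^'n^'n). lipschitz_seminorm d (fst z))"
    using is_seminorm_on_comp_linear[OF is_seminorm_lipschitz_seminorm] linear_fst by blast
  moreover have "is_seminorm_on V (\<lambda>z :: (real^'n) \<times> (complex^'n^'n). L_eps d \<epsilon> (snd z))"
    using is_seminorm_on_comp_linear[OF is_seminorm_L_eps] linear_snd by blast
  ultimately have "is_seminorm_on V (\<lambda>z. max (lipschitz_seminorm d (fst z))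
      (max (L_eps d \<epsilon> (snd z)) ((1 / \<gamma>) * norm (fst z - diag_map (snd z)))))"
    by (intro is_seminorm_on_max)
  then show ?thesis unfolding bridge_seminorm_def[abs_def] by simp
qed

lemma bridge_seminorm_eq_0_iff:
  assumes "0 < \<gamma>" "A \<in> herm"
  shows "bridge_seminorm \<gamma> (f, A) = 0 \<longleftrightarrow> (\<exists>t. (f, A) = t *\<^sub>R (unitC, mat 1))"
proof
  assume N0: "bridge_seminorm \<gamma> (f, A) = 0"
  then have "L_eps d \<epsilon> A = 0"
    using bridge_seminorm_ge(2)[of A \<gamma> f] L_eps_nonneg[of A] by simp
  then obtain t where t: "A = t *\<^sub>R mat 1" using L_eps_eq_0_iff[OF assms(2)] by blast
  have "norm (f - diag_map A) \<le> 0"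
    using bridge_seminorm_ge(3)[of f A \<gamma>] N0 assms(1) by (simp add: divide_le_0_iff)
  then have "f = t *\<^sub>R unitC"
    using t by (simp add: linear_scale[OF linear_diag_map] diag_map_mat_1)
  with t show "\<exists>t. (f, A) = t *\<^sub>R (unitC, mat 1)" by auto
next
  assume "\<exists>t. (f, A) = t *\<^sub>R (unitC, mat 1)"
  then obtain t where "f = t *\<^sub>R unitC" "A = t *\<^sub>R mat 1" by auto
  then show "bridge_seminorm \<gamma> (f, A) = 0"
    using L_eps_eq_0_iff[OF assms(2)] lipschitz_seminorm_eq_0_iff[of f]
    by (simp add: bridge_seminorm_def linear_scale[OF linear_diag_map] diag_map_mat_1)
qed

definition bridge_gen :: "'n + ('n \<times> 'n \<times> bool) \<Rightarrow> (real^'n) \<times> (complex^'n^'n)" where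
  "bridge_gen = case_sum (\<lambda>i. (axis i 1, 0)) (\<lambda>j. (0, herm_gen j))"

lemma range_bridge_gen: "range bridge_gen \<subseteq> UNIV \<times> herm"
proof (rule image_subsetI)
  fix k show "bridge_gen k \<in> UNIV \<times> herm"
    by (cases k) (simp_all add: bridge_gen_def herm_gen_herm subspace_0[OF subspace_herm])
qed

lemma pair_eq_sum_bridge_gen:
  assumes "B \<in> herm"
  shows "(g, B) = (\<Sum>k\<in>UNIV. case_sum (\<lambda>i. g $ i) (herm_coord B) k *\<^sub>R bridge_gen k)"
proof -
  have "(\<Sum>k\<in>UNIV. case_sum (\<lambda>i. g $ i) (herm_coord B) k *\<^sub>R bridge_gen k)
      = (\<Sum>i\<in>UNIV. g $ i *\<^sub>R (axis i 1, 0)) + (\<Sum>j\<in>UNIV. herm_coord B j *\<^sub>R (0, herm_gen j))"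
    by (simp add: UNIV_Plus_UNIV[symmetric] sum.Plus bridge_gen_def del: UNIV_Plus_UNIV)
  also have "\<dots> = (g, B)"
    using basis_expansion[of g] herm_eq_sum_herm_gen[OF assms]
    by (simp add: sum_prod scalar_mult_eq_scaleR)
  finally show ?thesis ..
qed

lemma lip_ball_bounded_bridge_seminorm:
  assumes "0 < \<gamma>"
  shows "lip_ball_bounded (UNIV \<times> herm) (unitC, mat 1) (bridge_seminorm \<gamma>) bridge_gen
           (diam + \<gamma> + \<epsilon>)"
  unfolding lip_ball_bounded_def
proof (intro ballI impI)
  fix z assume "z \<in> UNIV \<times> herm" and N: "bridge_seminorm \<gamma> z \<le> 1"
  then obtain f A where z: "z = (f, A)" and A: "A \<in> herm" by auto
  obtain x :: 'n where True by simp
  define t where "t = f $ x"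
  define g where "g = f - t *\<^sub>R unitC"
  define B where "B = A - t *\<^sub>R mat 1"
  define c where "c = case_sum (\<lambda>i. g $ i) (herm_coord B)"
  have N: "bridge_seminorm \<gamma> (f, A) \<le> 1" using N z by simp
  have LA: "L_eps d \<epsilon> A \<le> 1" using bridge_seminorm_ge(2) N by (rule order_trans)
  have B: "B \<in> herm"
    unfolding B_def
    by (intro subspace_diff[OF subspace_herm] subspace_scale[OF subspace_herm] A mat_1_herm)
  have "\<bar>Re (A $ x $ x) - t\<bar> \<le> \<gamma>"
    using component_le_norm_cart[of "f - diag_map A" x] norm_le_if_bridge_seminorm_le_1[OF assms N]
    unfolding t_def by (simp add: diag_map_def abs_minus_commute)
  then have "cmod (B $ p $ q) \<le> diam + \<gamma> + \<epsilon>" for p q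
    using norm_entry_minus_scalar_le[OF A LA, of t p q x] unfolding B_def by linarith
  then have "\<bar>herm_coord B j\<bar> \<le> diam + \<gamma> + \<epsilon>" for j by (rule abs_herm_coord_le)
  moreover have "\<bar>g $ i\<bar> \<le> diam + \<gamma> + \<epsilon>" for i
  proof -
    have "\<bar>g $ i\<bar> = \<bar>f $ i - f $ x\<bar>" by (simp add: g_def t_def unitC_def)
    also have "\<dots> \<le> lipschitz_seminorm d f * d i x" by (rule abs_diff_le_lipschitz_seminorm)
    also have "\<dots> \<le> 1 * diam"
      using order_trans[OF bridge_seminorm_ge(1) N] d_le_diam d_nonneg
        lipschitz_seminorm_nonneg by (intro mult_mono) simp_all
    finally show ?thesis using assms eps_pos by simp
  qed
  ultimately have "\<bar>c k\<bar> \<le> diam + \<gamma> + \<epsilon>" for k by (cases k) (simp_all add: c_def)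
  have "z = t *\<^sub>R (unitC, mat 1) + (g, B)" unfolding z g_def B_def by simp
  also have "(g, B) = (\<Sum>k\<in>UNIV. c k *\<^sub>R bridge_gen k)"
    unfolding c_def by (rule pair_eq_sum_bridge_gen[OF B])
  finally show "\<exists>t c. z = t *\<^sub>R (unitC, mat 1) + (\<Sum>k\<in>UNIV. c k *\<^sub>R bridge_gen k) \<and>
                         (\<forall>k. \<bar>c k\<bar> \<le> diam + \<gamma> + \<epsilon>)"
    using \<open>\<And>k. \<bar>c k\<bar> \<le> diam + \<gamma> + \<epsilon>\<close> by blast
qed

lemma is_lip_norm_bridge_seminorm:
  assumes "0 < \<gamma>"
  shows "is_lip_norm (UNIV \<times> herm) (sum_pos posC psd) (unitC, mat 1) (bridge_seminorm \<gamma>)"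
  using mat_1_herm bridge_seminorm_eq_0_iff[OF assms]
  by (intro is_lip_norm_if_lip_ball_bounded[OF subspace_Times[OF subspace_UNIV subspace_herm] _
        range_bridge_gen is_seminorm_bridge_seminorm[OF assms] _
        lip_ball_bounded_bridge_seminorm[OF assms]]) auto

lemma admissible_bridge_seminorm:
  assumes "0 < \<gamma>"
  shows "admissible UNIV posC unitC (lipschitz_seminorm d) herm psd (mat 1) (L_eps d \<epsilon>)
           (bridge_seminorm \<gamma>)"
  unfolding admissible_def
proof (intro conjI ballI is_lip_norm_bridge_seminorm[OF assms])
  fix f :: "real^'n"
  have "lipschitz_seminorm d f = bridge_seminorm \<gamma> (f, diag_mat f)"
    using lipschitz_seminorm_nonneg[of d f] by (simp add: bridge_seminorm_def L_eps_diag_mat)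
  then have "lipschitz_seminorm d f \<in> {bridge_seminorm \<gamma> (f, A) | A. A \<in> herm}"
    using diag_mat_herm by blast
  then show "lipschitz_seminorm d f = Inf {bridge_seminorm \<gamma> (f, A) | A. A \<in> herm}"
    using bridge_seminorm_ge(1) by (intro cInf_eq_minimum[symmetric]) auto
next
  fix A :: "complex^'n^'n"
  have "L_eps d \<epsilon> A = bridge_seminorm \<gamma> (diag_map A, A)"
    using lipschitz_seminorm_le_L_eps[of A] L_eps_nonneg[of A] by (simp add: bridge_seminorm_def)
  then have "L_eps d \<epsilon> A \<in> {bridge_seminorm \<gamma> (f, A) | f. f \<in> UNIV}" by blast
  then show "L_eps d \<epsilon> A = Inf {bridge_seminorm \<gamma> (f, A) | f. f \<in> UNIV}"
    using bridge_seminorm_ge(2) by (intro cInf_eq_minimum[symmetric]) auto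
qed

lemma lip_dist_bridge_diag_map:
  assumes "0 < \<gamma>" and \<mu>: "is_state UNIV posC unitC \<mu>"
  shows "lip_dist (UNIV \<times> herm) (bridge_seminorm \<gamma>) (embed_fst UNIV herm \<mu>)
           (embed_snd UNIV herm (\<lambda>A. if A \<in> herm then \<mu> (diag_map A) else 0)) \<le> ereal \<gamma>"
proof (rule lip_dist_le, clarify)
  fix f A assume "A \<in> herm" "bridge_seminorm \<gamma> (f, A) \<le> 1"
  have "\<bar>\<mu> f - \<mu> (diag_map A)\<bar> = \<bar>\<mu> (f - diag_map A)\<bar>"
    using linear_on_diff[OF is_state_linear_on[OF \<mu>] subspace_UNIV] by simp
  also have "\<dots> \<le> \<gamma>"
    using state_abs_le_norm[OF \<mu>]
      norm_le_if_bridge_seminorm_le_1[OF assms(1) \<open>bridge_seminorm \<gamma> (f, A) \<le> 1\<close>]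
    by (rule order_trans)
  finally show "\<bar>embed_fst UNIV herm \<mu> (f, A)
      - embed_snd UNIV herm (\<lambda>A. if A \<in> herm then \<mu> (diag_map A) else 0) (f, A)\<bar> \<le> \<gamma>"
    using \<open>A \<in> herm\<close> by (simp add: embed_fst_def embed_snd_def)
qed

lemma lip_dist_bridge_diag_mat:
  assumes "0 < \<gamma>" and \<nu>: "is_state herm psd (mat 1) \<nu>"
  shows "lip_dist (UNIV \<times> herm) (bridge_seminorm \<gamma>) (embed_fst UNIV herm (\<lambda>f. \<nu> (diag_mat f)))
           (embed_snd UNIV herm \<nu>) \<le> ereal (\<epsilon> + \<gamma>)"
proof (rule lip_dist_le, clarify)
  fix f A assume A: "A \<in> herm" and N: "bridge_seminorm \<gamma> (f, A) \<le> 1"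
  have lin: "linear_on herm \<nu>" using is_state_linear_on[OF \<nu>] .
  have "\<nu> A - \<nu> (diag_mat f) = \<nu> (A - diag_mat (diag_map A)) + \<nu> (diag_mat (diag_map A - f))"
    using linear_on_diff[OF lin subspace_herm A diag_mat_herm, of "diag_map A"]
      linear_on_diff[OF lin subspace_herm diag_mat_herm diag_mat_herm, of "diag_map A" f]
    by (simp add: linear_diff[OF linear_diag_mat])
  then have "\<bar>\<nu> (diag_mat f) - \<nu> A\<bar>
      \<le> \<bar>\<nu> (A - diag_mat (diag_map A))\<bar> + \<bar>\<nu> (diag_mat (diag_map A - f))\<bar>"
    by linarith
  also have "\<dots> \<le> \<epsilon> + \<gamma>"
  proof (rule add_mono)
    show "\<bar>\<nu> (A - diag_mat (diag_map A))\<bar> \<le> \<epsilon>"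
      using state_off_diag_le[OF \<nu> A]
        scaled_off_diag_norm_le_eps[OF order_trans[OF bridge_seminorm_ge(2) N]]
      by (rule order_trans)
    show "\<bar>\<nu> (diag_mat (diag_map A - f))\<bar> \<le> \<gamma>"
      using state_abs_le_norm[OF is_state_comp_diag_mat[OF \<nu>], of "diag_map A - f"]
        norm_le_if_bridge_seminorm_le_1[OF assms(1) N] by (simp add: norm_minus_commute)
  qed
  finally show "\<bar>embed_fst UNIV herm (\<lambda>f. \<nu> (diag_mat f)) (f, A) - embed_snd UNIV herm \<nu> (f, A)\<bar>
      \<le> \<epsilon> + \<gamma>"
    using A by (simp add: embed_fst_def embed_snd_def)
qed

lemma hausdorff_dist_bridge_seminorm_le:
  assumes "0 < \<gamma>"
  shows "hausdorff_dist (lip_dist (UNIV \<times> herm) (bridge_seminorm \<gamma>))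
           (embed_fst UNIV herm ` state_space UNIV posC unitC)
           (embed_snd UNIV herm ` state_space herm psd (mat 1)) \<le> ereal (\<epsilon> + \<gamma>)"
proof (rule hausdorff_dist_le)
  fix \<mu>' :: "(real^'n) \<times> (complex^'n^'n) \<Rightarrow> real"
  assume "\<mu>' \<in> embed_fst UNIV herm ` state_space UNIV posC unitC"
  then obtain \<mu> where \<mu>: "is_state UNIV posC unitC \<mu>" and \<mu>': "\<mu>' = embed_fst UNIV herm \<mu>"
    unfolding state_space_def by blast
  have "lip_dist (UNIV \<times> herm) (bridge_seminorm \<gamma>) \<mu>'
          (embed_snd UNIV herm (\<lambda>A. if A \<in> herm then \<mu> (diag_map A) else 0)) \<le> ereal (\<epsilon> + \<gamma>)"
    using lip_dist_bridge_diag_map[OF assms \<mu>] eps_pos unfolding \<mu>'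
    by (simp add: order_trans)
  moreover have "embed_snd UNIV herm (\<lambda>A. if A \<in> herm then \<mu> (diag_map A) else 0)
      \<in> embed_snd UNIV herm ` state_space herm psd (mat 1)"
    using is_state_comp_diag_map[OF \<mu>] unfolding state_space_def by blast
  ultimately show "\<exists>\<nu>'\<in>embed_snd UNIV herm ` state_space herm psd (mat 1).
      lip_dist (UNIV \<times> herm) (bridge_seminorm \<gamma>) \<mu>' \<nu>' \<le> ereal (\<epsilon> + \<gamma>)" by blast
next
  fix \<nu>' :: "(real^'n) \<times> (complex^'n^'n) \<Rightarrow> real"
  assume "\<nu>' \<in> embed_snd UNIV herm ` state_space herm psd (mat 1)"
  then obtain \<nu> where \<nu>: "is_state herm psd (mat 1) \<nu>" and \<nu>': "\<nu>' = embed_snd UNIV herm \<nu>"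
    unfolding state_space_def by blast
  have "embed_fst UNIV herm (\<lambda>f. \<nu> (diag_mat f)) \<in> embed_fst UNIV herm ` state_space UNIV posC unitC"
    using is_state_comp_diag_mat[OF \<nu>] unfolding state_space_def by blast
  then show "\<exists>\<mu>'\<in>embed_fst UNIV herm ` state_space UNIV posC unitC.
      lip_dist (UNIV \<times> herm) (bridge_seminorm \<gamma>) \<mu>' \<nu>' \<le> ereal (\<epsilon> + \<gamma>)"
    using lip_dist_bridge_diag_mat[OF assms \<nu>] unfolding \<nu>' by blast
qed

theorem dist_q_le_eps:
  "dist_q UNIV posC unitC (lipschitz_seminorm d) herm psd (mat 1) (L_eps d \<epsilon>) \<le> ereal \<epsilon>"
proof (rule ereal_le_epsilon2)
  fix \<gamma> :: real assume "0 < \<gamma>"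
  have "dist_q UNIV posC unitC (lipschitz_seminorm d) herm psd (mat 1) (L_eps d \<epsilon>)
      \<le> hausdorff_dist (lip_dist (UNIV \<times> herm) (bridge_seminorm \<gamma>))
           (embed_fst UNIV herm ` state_space UNIV posC unitC)
           (embed_snd UNIV herm ` state_space herm psd (mat 1))"
    unfolding dist_q_def using admissible_bridge_seminorm[OF \<open>0 < \<gamma>\<close>] by (auto intro: INF_lower)
  also have "\<dots> \<le> ereal (\<epsilon> + \<gamma>)" by (rule hausdorff_dist_bridge_seminorm_le[OF \<open>0 < \<gamma>\<close>])
  finally show "dist_q UNIV posC unitC (lipschitz_seminorm d) herm psd (mat 1) (L_eps d \<epsilon>)
      \<le> ereal \<epsilon> + ereal \<gamma>" by simp
qed

end

theorem mainTheorem5: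
  fixes d :: "'n::finite \<Rightarrow> 'n \<Rightarrow> real" and \<epsilon> :: real
  assumes "\<forall>x y. d x y = 0 \<longleftrightarrow> x = y"
    and "\<forall>x y. d x y = d y x"
    and "\<forall>x y z. d x z \<le> d x y + d y z"
    and "\<epsilon> > 0"
  shows "is_lip_norm herm psd (mat 1) (L_eps d \<epsilon>) \<and>
         dist_q UNIV posC unitC (lipschitz_seminorm d) herm psd (mat 1) (L_eps d \<epsilon>) \<le> ereal \<epsilon>"
proof -
  interpret finite_metric_eps d \<epsilon> by unfold_locales (use assms in auto)
  show ?thesis using is_lip_norm_L_eps dist_q_le_eps ..
qed

end
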